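(* Let $S,T$ be left semi-braces, $\sigma:T\to\mathrm{Aut}(S)$ a homomorphism from $(T,\cdot)$ into the automorphism group of $(S,+,\cdot)$ (write ${}^ua=\sigma(u)(a)$), and $\delta:S\to\mathrm{End}(T)$ an anti-homomorphism from $(S,+)$ into the automorphism group of $(T,+)$ (write $u^a=\delta(a)(u)$) such that $$(uv)^{\lambda_a({}^ub)}+u\left((u^{-1})^b+w\right)=u\left(v^b+w\right)$$ for all $a,b\in S$, $u,v,w\in T$. Then the double semidirect product of $S$ and $T$ via $\sigma$ and $\delta$, i.e. $S\times T$ with $(a,u)+(b,v)=(a+b,u^b+v)$ and $(a,u)(b,v)=(a\,{}^ub,uv)$, is a left semi-brace. If moreover $S$ and $T$ are left cancellative left semi-braces, then this double semidirect product is a left cancellative left semi-brace.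
   Context: A left semi-brace is a triple $(S,+,\cdot)$ such that $(S,+)$ is a semigroup, $(S,\cdot)$ is a group, and $a(b+c)=ab+a(a^{-1}+c)$ for all $a,b,c\in S$; it is left cancellative if $(S,+)$ is left cancellative. Set $\lambda_a(b)=a(a^{-1}+b)$. An automorphism of $(S,+,\cdot)$ is a bijection preserving both operations. That $\delta$ is an anti-homomorphism from $(S,+)$ means $u^{a+b}=(u^a)^b$ for all $a,b\in S$, $u\in T$. *)

theory Defs
  imports Main
begin

definition is_semigroup_op :: "('a \<Rightarrow> 'a \<Rightarrow> 'a) \<Rightarrow> bool" where
  "is_semigroup_op p \<longleftrightarrow> (\<forall>a b c. p (p a b) c = p a (p b c))"

definition is_group_op :: "('a \<Rightarrow> 'a \<Rightarrow> 'a) \<Rightarrow> bool" where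
  "is_group_op m \<longleftrightarrow> is_semigroup_op m \<and>
     (\<exists>e. (\<forall>a. m e a = a \<and> m a e = a) \<and> (\<forall>a. \<exists>b. m a b = e \<and> m b a = e))"

definition gunit :: "('a \<Rightarrow> 'a \<Rightarrow> 'a) \<Rightarrow> 'a" where
  "gunit m = (THE e. \<forall>a. m e a = a \<and> m a e = a)"

definition ginv :: "('a \<Rightarrow> 'a \<Rightarrow> 'a) \<Rightarrow> 'a \<Rightarrow> 'a" where
  "ginv m a = (THE b. m a b = gunit m \<and> m b a = gunit m)"

definition left_semi_brace :: "('a \<Rightarrow> 'a \<Rightarrow> 'a) \<Rightarrow> ('a \<Rightarrow> 'a \<Rightarrow> 'a) \<Rightarrow> bool" where
  "left_semi_brace add mul \<longleftrightarrow> is_semigroup_op add \<and> is_group_op mul \<and>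
     (\<forall>a b c. mul a (add b c) = add (mul a b) (mul a (add (ginv mul a) c)))"

definition left_cancellative :: "('a \<Rightarrow> 'a \<Rightarrow> 'a) \<Rightarrow> bool" where
  "left_cancellative add \<longleftrightarrow> (\<forall>a b c. add a b = add a c \<longrightarrow> b = c)"

definition lam :: "('a \<Rightarrow> 'a \<Rightarrow> 'a) \<Rightarrow> ('a \<Rightarrow> 'a \<Rightarrow> 'a) \<Rightarrow> 'a \<Rightarrow> 'a \<Rightarrow> 'a" where
  "lam add mul a b = mul a (add (ginv mul a) b)"

definition is_brace_aut :: "('a \<Rightarrow> 'a \<Rightarrow> 'a) \<Rightarrow> ('a \<Rightarrow> 'a \<Rightarrow> 'a) \<Rightarrow> ('a \<Rightarrow> 'a) \<Rightarrow> bool" where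
  "is_brace_aut add mul f \<longleftrightarrow> bij f \<and> (\<forall>a b. f (add a b) = add (f a) (f b)) \<and>
     (\<forall>a b. f (mul a b) = mul (f a) (f b))"

definition is_add_aut :: "('a \<Rightarrow> 'a \<Rightarrow> 'a) \<Rightarrow> ('a \<Rightarrow> 'a) \<Rightarrow> bool" where
  "is_add_aut add f \<longleftrightarrow> bij f \<and> (\<forall>a b. f (add a b) = add (f a) (f b))"

definition dsd_add :: "('a \<Rightarrow> 'a \<Rightarrow> 'a) \<Rightarrow> ('b \<Rightarrow> 'b \<Rightarrow> 'b) \<Rightarrow> ('a \<Rightarrow> 'b \<Rightarrow> 'b)
    \<Rightarrow> 'a \<times> 'b \<Rightarrow> 'a \<times> 'b \<Rightarrow> 'a \<times> 'b" where
  "dsd_add addS addT \<delta> x y = (addS (fst x) (fst y), addT (\<delta> (fst y) (snd x)) (snd y))"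

definition dsd_mul :: "('a \<Rightarrow> 'a \<Rightarrow> 'a) \<Rightarrow> ('b \<Rightarrow> 'b \<Rightarrow> 'b) \<Rightarrow> ('b \<Rightarrow> 'a \<Rightarrow> 'a)
    \<Rightarrow> 'a \<times> 'b \<Rightarrow> 'a \<times> 'b \<Rightarrow> 'a \<times> 'b" where
  "dsd_mul mulS mulT \<sigma> x y = (mulS (fst x) (\<sigma> (snd x) (fst y)), mulT (snd x) (snd y))"

end

theory Submission
  imports Defs
begin

text \<open>The multiplication is the semidirect product of the groups (S,\<cdot>) and (T,\<cdot>)
  along \<sigma>, so (a,u)\<inverse> = (\<sigma> (u\<inverse>) (a\<inverse>), u\<inverse>); the addition is the semidirect
  product of the semigroups (S,+) and (T,+) along the anti-action \<delta>. Expanding the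
  brace identity for (a,u), (b,v), (c,w) componentwise, the S-component is the brace
  identity of S for a, \<sigma> u b, \<sigma> u c (as \<sigma> u is additive and undoes \<sigma> (u\<inverse>)), and
  the T-component is literally the compatibility hypothesis.\<close>

lemma group_op_assoc: "is_group_op m \<Longrightarrow> m (m a b) c = m a (m b c)"
  unfolding is_group_op_def is_semigroup_op_def by blast

lemma gunit_eqI:
  assumes "is_group_op m" and "\<And>a. m e a = a \<and> m a e = a"
  shows "gunit m = e"
  unfolding gunit_def
proof (rule the_equality)
  fix e' assume "\<forall>a. m e' a = a \<and> m a e' = a"
  then show "e' = e" using assms(2) by metis
qed (use assms(2) in blast)

lemma gunit_left: "is_group_op m \<Longrightarrow> m (gunit m) a = a"
  and gunit_right: "is_group_op m \<Longrightarrow> m a (gunit m) = a"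
  by (metis gunit_eqI is_group_op_def)+

lemma group_inverse_unique:
  assumes "is_group_op m" and "m b a = gunit m" and "m a c = gunit m"
  shows "b = c"
  by (metis assms group_op_assoc gunit_left gunit_right)

lemma ginv_eqI:
  assumes "is_group_op m" and "m a b = gunit m" and "m b a = gunit m"
  shows "ginv m a = b"
  unfolding ginv_def
proof (rule the_equality)
  fix b' assume "m a b' = gunit m \<and> m b' a = gunit m"
  then show "b' = b" using group_inverse_unique assms by metis
qed (use assms in blast)

lemma ginv_right: "is_group_op m \<Longrightarrow> m a (ginv m a) = gunit m"
  and ginv_left: "is_group_op m \<Longrightarrow> m (ginv m a) a = gunit m"
  by (smt (verit) ginv_eqI gunit_eqI is_group_op_def)+

lemma is_group_opI:
  assumes "\<And>a b c. m (m a b) c = m a (m b c)"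
    and "\<And>a. m e a = a" "\<And>a. m a e = a"
    and "\<And>a. m a (i a) = e" "\<And>a. m (i a) a = e"
  shows "is_group_op m"
  unfolding is_group_op_def is_semigroup_op_def using assms by metis

lemma idempotent_eq_gunit:
  assumes "is_group_op m" and "m x x = x"
  shows "x = gunit m"
  by (metis assms group_op_assoc ginv_left gunit_left)

lemma group_hom_gunit:
  assumes "is_group_op m" "is_group_op m'" and "\<And>a b. f (m a b) = m' (f a) (f b)"
  shows "f (gunit m) = gunit m'"
  by (metis assms gunit_left idempotent_eq_gunit)

lemma action_gunit:
  assumes "is_group_op m" and "\<And>u v. \<sigma> (m u v) = \<sigma> u \<circ> \<sigma> v" and "inj (\<sigma> (gunit m))"
  shows "\<sigma> (gunit m) x = x"
proof -
  have "\<sigma> (gunit m) (\<sigma> (gunit m) x) = \<sigma> (gunit m) x"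
    using assms(2)[of "gunit m" "gunit m"] gunit_left[OF assms(1)] by (metis comp_apply)
  then show ?thesis using assms(3) by (simp add: inj_eq)
qed

lemma action_ginv:
  assumes "is_group_op m" and "\<And>u v. \<sigma> (m u v) = \<sigma> u \<circ> \<sigma> v" and "inj (\<sigma> (gunit m))"
  shows "\<sigma> u (\<sigma> (ginv m u) x) = x"
  by (metis assms action_gunit comp_apply ginv_right)

lemma dsd_add_semigroup:
  assumes "is_semigroup_op addS" "is_semigroup_op addT"
    and "\<And>a u v. \<delta> a (addT u v) = addT (\<delta> a u) (\<delta> a v)"
    and "\<And>a b u. \<delta> (addS a b) u = \<delta> b (\<delta> a u)"
  shows "is_semigroup_op (dsd_add addS addT \<delta>)"
  using assms unfolding is_semigroup_op_def dsd_add_def by simp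

lemma dsd_add_left_cancellative:
  assumes "left_cancellative addS" "left_cancellative addT"
  shows "left_cancellative (dsd_add addS addT \<delta>)"
  using assms unfolding left_cancellative_def dsd_add_def by (metis prod.expand prod.inject)

lemma dsd_mul_group:
  assumes S: "is_group_op mulS" and T: "is_group_op mulT"
    and \<sigma>_mul: "\<And>u a b. \<sigma> u (mulS a b) = mulS (\<sigma> u a) (\<sigma> u b)"
    and \<sigma>_hom: "\<And>u v. \<sigma> (mulT u v) = \<sigma> u \<circ> \<sigma> v"
    and \<sigma>_inj: "\<And>u. inj (\<sigma> u)"
  shows dsd_mul_is_group: "is_group_op (dsd_mul mulS mulT \<sigma>)"
    and ginv_dsd_mul: "ginv (dsd_mul mulS mulT \<sigma>) (a, u) =
      (\<sigma> (ginv mulT u) (ginv mulS a), ginv mulT u)"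
proof -
  let ?M = "dsd_mul mulS mulT \<sigma>"
  let ?e = "(gunit mulS, gunit mulT)"
  let ?i = "\<lambda>(a, u). (\<sigma> (ginv mulT u) (ginv mulS a), ginv mulT u)"
  have \<sigma>_unit: "\<sigma> (gunit mulT) x = x" for x
    using T \<sigma>_hom \<sigma>_inj by (rule action_gunit)
  have \<sigma>_inv: "\<sigma> u (\<sigma> (ginv mulT u) x) = x" for u x
    using T \<sigma>_hom \<sigma>_inj by (rule action_ginv)
  have \<sigma>_fixes_unit: "\<sigma> u (gunit mulS) = gunit mulS" for u
    by (rule group_hom_gunit[of mulS mulS "\<sigma> u", OF S S \<sigma>_mul])
  have unit: "?M ?e x = x" "?M x ?e = x" for x
    unfolding dsd_mul_def by (simp_all add: gunit_left gunit_right S T \<sigma>_unit \<sigma>_fixes_unit)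
  have inv: "?M x (?i x) = ?e" "?M (?i x) x = ?e" for x
    unfolding dsd_mul_def
    by (simp_all add: case_prod_beta ginv_left ginv_right S T \<sigma>_inv \<sigma>_mul[symmetric] \<sigma>_fixes_unit)
  have assoc: "?M (?M x y) z = ?M x (?M y z)" for x y z
    unfolding dsd_mul_def by (simp add: group_op_assoc S T \<sigma>_mul \<sigma>_hom)
  show group: "is_group_op ?M"
    by (rule is_group_opI[of ?M ?e ?i, OF assoc unit inv])
  have unit_eq: "gunit ?M = ?e"
    using gunit_eqI[OF group] unit by blast
  show "ginv ?M (a, u) = (\<sigma> (ginv mulT u) (ginv mulS a), ginv mulT u)"
    by (rule ginv_eqI[OF group]) (use inv[of "(a, u)"] unit_eq in simp_all)
qed

lemma dsd_left_brace_identity: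
  fixes x y z :: "'a \<times> 'b"
  assumes S: "left_semi_brace addS mulS" and T: "is_group_op mulT"
    and \<sigma>_add: "\<And>u a b. \<sigma> u (addS a b) = addS (\<sigma> u a) (\<sigma> u b)"
    and \<sigma>_mul: "\<And>u a b. \<sigma> u (mulS a b) = mulS (\<sigma> u a) (\<sigma> u b)"
    and \<sigma>_hom: "\<And>u v. \<sigma> (mulT u v) = \<sigma> u \<circ> \<sigma> v"
    and \<sigma>_inj: "\<And>u. inj (\<sigma> u)"
    and compat: "\<And>a b u v w.
       addT (\<delta> (lam addS mulS a (\<sigma> u b)) (mulT u v))
            (mulT u (addT (\<delta> b (ginv mulT u)) w))
       = mulT u (addT (\<delta> b v) w)"
  defines "A \<equiv> dsd_add addS addT \<delta>" and "M \<equiv> dsd_mul mulS mulT \<sigma>"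
  shows "M x (A y z) = A (M x y) (M x (A (ginv M x) z))"
proof -
  obtain a u b v c w where xyz: "x = (a, u)" "y = (b, v)" "z = (c, w)"
    by (metis prod.exhaust)
  have S_group: "is_group_op mulS"
    and S_brace: "\<And>a b c. mulS a (addS b c) = addS (mulS a b) (lam addS mulS a c)"
    using S unfolding left_semi_brace_def lam_def by blast+
  have \<sigma>_inv: "\<sigma> u (\<sigma> (ginv mulT u) x) = x" for x
    using T \<sigma>_hom \<sigma>_inj by (rule action_ginv)
  have ginv_M: "ginv M x = (\<sigma> (ginv mulT u) (ginv mulS a), ginv mulT u)"
    unfolding M_def xyz using S_group T \<sigma>_mul \<sigma>_hom \<sigma>_inj by (rule ginv_dsd_mul)
  show ?thesis
    unfolding ginv_M unfolding xyz A_def M_def dsd_add_def dsd_mul_def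
    by (simp only: prod.sel \<sigma>_add \<sigma>_inv flip: lam_def) (simp add: S_brace compat)
qed

theorem corollary39:
  fixes addS mulS :: "'a \<Rightarrow> 'a \<Rightarrow> 'a"
    and addT mulT :: "'b \<Rightarrow> 'b \<Rightarrow> 'b"
    and \<sigma> :: "'b \<Rightarrow> 'a \<Rightarrow> 'a"
    and \<delta> :: "'a \<Rightarrow> 'b \<Rightarrow> 'b"
  assumes S: "left_semi_brace addS mulS"
    and T: "left_semi_brace addT mulT"
    and sigma_aut: "\<And>u. is_brace_aut addS mulS (\<sigma> u)"
    and sigma_hom: "\<And>u v. \<sigma> (mulT u v) = \<sigma> u \<circ> \<sigma> v"
    and delta_aut: "\<And>a. is_add_aut addT (\<delta> a)"
    and delta_antihom: "\<And>a b u. \<delta> (addS a b) u = \<delta> b (\<delta> a u)"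
    and compat: "\<And>a b u v w.
       addT (\<delta> (lam addS mulS a (\<sigma> u b)) (mulT u v))
            (mulT u (addT (\<delta> b (ginv mulT u)) w))
       = mulT u (addT (\<delta> b v) w)"
  shows "left_semi_brace (dsd_add addS addT \<delta>) (dsd_mul mulS mulT \<sigma>)
    \<and> (left_cancellative addS \<and> left_cancellative addT
         \<longrightarrow> left_cancellative (dsd_add addS addT \<delta>))"
proof -
  have S_parts: "is_semigroup_op addS" "is_group_op mulS"
    and T_parts: "is_semigroup_op addT" "is_group_op mulT"
    using S T unfolding left_semi_brace_def by blast+
  have \<sigma>_add: "\<And>u a b. \<sigma> u (addS a b) = addS (\<sigma> u a) (\<sigma> u b)"
    and \<sigma>_mul: "\<And>u a b. \<sigma> u (mulS a b) = mulS (\<sigma> u a) (\<sigma> u b)"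
    and \<sigma>_inj: "\<And>u. inj (\<sigma> u)"
    using sigma_aut unfolding is_brace_aut_def bij_def by blast+
  have \<delta>_add: "\<And>a u v. \<delta> a (addT u v) = addT (\<delta> a u) (\<delta> a v)"
    using delta_aut unfolding is_add_aut_def by blast
  have "is_semigroup_op (dsd_add addS addT \<delta>)"
    using S_parts(1) T_parts(1) \<delta>_add delta_antihom by (rule dsd_add_semigroup)
  moreover have "is_group_op (dsd_mul mulS mulT \<sigma>)"
    using S_parts(2) T_parts(2) \<sigma>_mul sigma_hom \<sigma>_inj by (rule dsd_mul_is_group)
  moreover note dsd_left_brace_identity[of addS mulS mulT \<sigma> addT \<delta>,
      OF S T_parts(2) \<sigma>_add \<sigma>_mul sigma_hom \<sigma>_inj compat]
  ultimately show ?thesis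
    unfolding left_semi_brace_def using dsd_add_left_cancellative by blast
qed

end
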